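(* Let $\kappa=-1$ and, for $\sigma\in[0,1]$ and $h>0$, define $$f(\sigma,h^{-1})=-\tfrac14\pi+\Im\log\Gamma\big(\tfrac34-\tfrac12\sigma+\tfrac12 i\kappa h^{-1}\big)-\Im\log\Gamma\big(\tfrac14-\tfrac12\sigma+\tfrac12 i\kappa h^{-1}\big).$$ Then for all $0<h^{-1}<\infty$ we have $-\frac\pi2<f(0,h^{-1})<0$ and $-\frac{3\pi}2<f(1,h^{-1})<-\frac\pi2$, and $\partial_\sigma f(\sigma,h^{-1})<0$ for all $0<\sigma<1$ and $0<h^{-1}<\infty$. Hence there are no solutions of $f(\sigma,h^{-1})\in2\pi\mathbb{Z}$ with $0<\sigma<1$ and $0<h^{-1}<\infty$.
   Context: $\log\Gamma$ denotes the branch of the logarithm of the Gamma function which is analytic on $\mathbb{C}\setminus(-\infty,0]$ and satisfies $\log\Gamma(1)=0$. *)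

theory Defs
  imports "HOL-Analysis.Analysis"
begin

text \<open>kappa = -1. The paper's f(sigma, h^{-1}); here the second argument t stands for h^{-1}.
  ln_Gamma on complex numbers is the library's principal branch of log Gamma
  (holomorphic on C minus (-inf,0], with ln_Gamma 1 = 0).\<close>

definition kappa :: real where "kappa = -1"

definition f_sig :: "real \<Rightarrow> real \<Rightarrow> real" where
  "f_sig \<sigma> t =
     - pi / 4
     + Im (ln_Gamma (Complex (3/4 - \<sigma>/2) (kappa * t / 2)))
     - Im (ln_Gamma (Complex (1/4 - \<sigma>/2) (kappa * t / 2)))"

end

theory Submission
  imports Defs
begin

text \<open>Write \<open>y = -t/2\<close>. The reflection formula \<open>\<Gamma>(s) \<Gamma>(1 - s) = \<pi> / sin (\<pi> s)\<close> at
  \<open>s = 1/4 + iy\<close>, whose partner \<open>3/4 - iy\<close> is the conjugate of \<open>3/4 + iy\<close>, turns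
  \<open>f(0)\<close> into \<open>-\<pi>/4 + arg sin (\<pi>(1/4 + iy))\<close>, and this argument has modulus below \<open>\<pi>/4\<close>.
  The recurrence \<open>\<Gamma>(s + 1) = s \<Gamma>(s)\<close> at \<open>s = -1/4 + iy\<close> then gives
  \<open>f(1) = -\<pi>/4 - arg sin (\<pi>(1/4 + iy)) + arg (-1/4 + iy)\<close> with the last argument in
  \<open>(-\<pi>, -\<pi>/2)\<close>. Both identities hold for the principal branches of \<open>log \<Gamma>\<close> and \<open>Ln\<close>
  because their defect is continuous with values in \<open>2\<pi>i\<int>\<close> and vanishes on the real axis.
  Finally \<open>\<partial>\<^sub>\<sigma> f = -(Im \<psi>(3/4 - \<sigma>/2 + iy) - Im \<psi>(1/4 - \<sigma>/2 + iy))/2 < 0\<close> by the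
  series for \<open>\<psi>\<close>, so \<open>f(\<sigma>)\<close> stays in \<open>(-3\<pi>/2, 0)\<close>, which contains no multiple of \<open>2\<pi>\<close>.\<close>

lemma continuous_Ints_valued_constant:
  fixes h :: "'a::topological_space \<Rightarrow> real"
  assumes "connected S" "continuous_on S h" "\<And>x. x \<in> S \<Longrightarrow> h x \<in> \<int>"
  shows "h constant_on S"
proof (rule continuous_discrete_range_constant[OF assms(1,2)])
  fix x assume "x \<in> S"
  show "\<exists>e>0. \<forall>y. y \<in> S \<and> h y \<noteq> h x \<longrightarrow> e \<le> norm (h y - h x)"
  proof (intro exI[of _ 1] conjI allI impI)
    fix y assume y: "y \<in> S \<and> h y \<noteq> h x"
    obtain m n :: int where "h x = of_int m" "h y = of_int n"
      using assms(3) \<open>x \<in> S\<close> y by (metis Ints_cases)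
    moreover from this y have "1 \<le> \<bar>n - m\<bar>" by auto
    ultimately show "1 \<le> norm (h y - h x)" by (simp flip: of_int_diff)
  qed simp
qed

text \<open>Since \<open>exp (F x) > 0\<close>, \<open>Im (F x)\<close> lies in \<open>2\<pi>\<int>\<close>; being continuous, it is constant on \<open>S\<close>.\<close>

lemma Im_log_of_pos_real_eq_0:
  fixes F :: "'a::topological_space \<Rightarrow> complex"
  assumes "connected S" "continuous_on S F"
    and pos: "\<And>x. x \<in> S \<Longrightarrow> \<exists>r>0. exp (F x) = of_real r"
    and "a \<in> S" "Im (F a) = 0" "x \<in> S"
  shows "Im (F x) = 0"
proof -
  have "(\<lambda>x. Im (F x) / (2 * pi)) constant_on S"
  proof (rule continuous_Ints_valued_constant[OF \<open>connected S\<close>])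
    show "continuous_on S (\<lambda>x. Im (F x) / (2 * pi))"
      by (intro continuous_intros assms(2)) simp
    fix x assume "x \<in> S"
    then obtain r where "r > 0" "exp (F x) = exp (of_real (ln r))"
      using pos by (auto simp: exp_of_real)
    then obtain n :: int where "F x = of_real (ln r) + (of_int (2 * n) * pi) * \<i>"
      unfolding exp_eq by blast
    then show "Im (F x) / (2 * pi) \<in> \<int>" by simp
  qed
  then obtain c where "\<forall>x\<in>S. Im (F x) / (2 * pi) = c"
    unfolding constant_on_def by blast
  then have "Im (F x) / (2 * pi) = Im (F a) / (2 * pi)"
    using assms(4,6) by simp
  with assms(5) show ?thesis by simp
qed

lemma Im_ln_Gamma_plus1:
  fixes z :: complex
  assumes "z \<notin> \<real>\<^sub>\<le>\<^sub>0"
  shows "Im (ln_Gamma (z + 1)) = Im (Ln z) + Im (ln_Gamma z)"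
proof -
  define F where "F z = ln_Gamma (z + 1) - Ln z - ln_Gamma z" for z
  have slot: "\<real>\<^sub>\<le>\<^sub>0 = complex_of_real ` {..0}"
    by (auto simp: nonpos_Reals_def)
  have conn: "connected (- \<real>\<^sub>\<le>\<^sub>0 :: complex set)"
    unfolding slot by (intro starlike_imp_connected starlike_slotted_complex_plane_left)
  have cont: "continuous_on (- \<real>\<^sub>\<le>\<^sub>0) F"
    unfolding F_def
    by (intro continuous_at_imp_continuous_on ballI continuous_intros)
       (auto simp: complex_nonpos_Reals_iff)
  have pos: "\<exists>r>0. exp (F w) = of_real r" if "w \<in> - \<real>\<^sub>\<le>\<^sub>0" for w
  proof -
    have w: "w \<notin> \<int>\<^sub>\<le>\<^sub>0" "w + 1 \<notin> \<int>\<^sub>\<le>\<^sub>0" "w + 1 \<notin> \<real>\<^sub>\<le>\<^sub>0" "w \<noteq> 0"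
      using that nonpos_Ints_subset_nonpos_Reals by (auto simp: complex_nonpos_Reals_iff)
    have "exp (F w) = Gamma (w + 1) / w / Gamma w"
      using that w by (simp add: F_def exp_diff Gamma_complex_altdef)
    also have "\<dots> = 1"
      using w by (simp add: Gamma_plus1 Gamma_eq_zero_iff)
    finally show ?thesis by (intro exI[of _ 1]) simp
  qed
  have F1: "Im (F 1) = 0"
  proof -
    have "ln_Gamma (1 + 1 :: complex) = of_real (ln_Gamma 2)"
      using ln_Gamma_complex_of_real[of 2] by simp
    moreover have "ln_Gamma (1 :: complex) = of_real (ln_Gamma 1)"
      using ln_Gamma_complex_of_real[of 1] by simp
    ultimately show ?thesis by (simp add: F_def)
  qed
  have "Im (F z) = 0"
    using Im_log_of_pos_real_eq_0[OF conn cont pos _ F1] assms by simp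
  then show ?thesis by (simp add: F_def)
qed

lemma Im_ln_Gamma_reflection:
  fixes a y :: real
  assumes "0 < a" "a < 1"
  shows "Im (ln_Gamma (Complex (1 - a) y)) - Im (ln_Gamma (Complex a y))
           = Im (Ln (sin (of_real pi * Complex a y)))"
proof -
  define A where "A y = Complex (1 - a) y" for y
  define B where "B y = Complex a y" for y
  define F where "F y = ln_Gamma (A y) - ln_Gamma (B y) - Ln (sin (of_real pi * B y))" for y
  have AB: "A y \<notin> \<real>\<^sub>\<le>\<^sub>0" "A y \<notin> \<int>\<^sub>\<le>\<^sub>0" "B y \<notin> \<real>\<^sub>\<le>\<^sub>0" "B y \<notin> \<int>\<^sub>\<le>\<^sub>0" for y
    using assms nonpos_Ints_subset_nonpos_Reals
    by (auto simp: A_def B_def complex_nonpos_Reals_iff)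
  have sin_pos: "Re (sin (of_real pi * B y)) > 0" for y
    using assms by (intro Re_sin_pos) (simp_all add: B_def)
  then have sin_nonpos: "sin (of_real pi * B y) \<notin> \<real>\<^sub>\<le>\<^sub>0" for y
    by (auto simp: complex_nonpos_Reals_iff not_le)
  have cont: "continuous_on UNIV F"
    unfolding F_def A_def B_def Complex_eq
    by (intro continuous_at_imp_continuous_on ballI continuous_intros)
       (use AB sin_nonpos in \<open>simp_all add: A_def B_def Complex_eq\<close>)
  have pos: "\<exists>r>0. exp (F y) = of_real r" for y
  proof -
    have G: "Gamma (A y) \<noteq> 0" "Gamma (B y) \<noteq> 0"
      using AB by (auto simp: Gamma_eq_zero_iff)
    have sin_nz: "sin (of_real pi * B y) \<noteq> 0" using sin_pos[of y] by auto
    have "1 - B y = cnj (A y)" by (simp add: A_def B_def complex_eq_iff)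
    then have refl: "Gamma (B y) * Gamma (cnj (A y)) = of_real pi / sin (of_real pi * B y)"
      using Gamma_reflection_complex[of "B y"] by simp
    have "exp (F y) = Gamma (A y) / Gamma (B y) / sin (of_real pi * B y)"
      using AB sin_nz by (simp add: F_def exp_diff Gamma_complex_altdef)
    also have "\<dots> = Gamma (A y) * cnj (Gamma (A y)) / of_real pi"
      using G sin_nz refl by (simp add: field_simps cnj_Gamma)
    also have "\<dots> = of_real ((cmod (Gamma (A y)))\<^sup>2 / pi)"
      by (simp flip: complex_norm_square)
    finally show ?thesis using G by (intro exI[of _ "(cmod (Gamma (A y)))\<^sup>2 / pi"]) simp
  qed
  have F0: "Im (F 0) = 0"
  proof -
    have real: "A 0 = of_real (1 - a)" "B 0 = of_real a"
      by (simp_all add: A_def B_def complex_eq_iff)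
    then have sin_real: "sin (of_real pi * B 0) = of_real (sin (pi * a))"
      by (metis of_real_mult sin_of_real)
    have "sin (pi * a) > 0" using assms by (intro sin_gt_zero) auto
    then have "Im (Ln (sin (of_real pi * B 0))) = 0"
      unfolding sin_real by (simp add: Ln_of_real)
    moreover have "Im (ln_Gamma (A 0)) = 0" "Im (ln_Gamma (B 0)) = 0"
      unfolding real using assms by (simp_all only: ln_Gamma_complex_of_real Im_complex_of_real diff_gt_0_iff_gt)
    ultimately show ?thesis by (simp add: F_def)
  qed
  have "Im (F y) = 0"
    using Im_log_of_pos_real_eq_0[OF connected_UNIV cont pos _ F0] by simp
  then show ?thesis by (simp add: F_def A_def B_def)
qed

text \<open>As \<open>sin (\<pi>/4) = cos (\<pi>/4)\<close>, the tangent of the argument below is \<open>tanh (\<pi> y)\<close>.\<close>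

lemma abs_Im_Ln_sin_quarter_less:
  fixes y :: real
  shows "\<bar>Im (Ln (sin (of_real pi * Complex (1/4) y)))\<bar> < pi / 4"
proof -
  define w where "w = sin (of_real pi * Complex (1/4) y)"
  have Re: "Re w = sin (pi/4) * (exp (pi*y) + exp (- (pi*y))) / 2" by (simp add: w_def Re_sin)
  have Im: "Im w = cos (pi/4) * (exp (pi*y) - exp (- (pi*y))) / 2" by (simp add: w_def Im_sin)
  have "Re w > 0" unfolding Re by (intro divide_pos_pos mult_pos_pos add_pos_pos sin_gt_zero) auto
  moreover from this have "w \<noteq> 0" by auto
  ultimately have Ln: "Im (Ln w) = arctan (Im w / Re w)" by (simp add: Im_Ln_eq)
  have "\<bar>Im w / Re w\<bar> = \<bar>exp (pi*y) - exp (- (pi*y))\<bar> / (exp (pi*y) + exp (- (pi*y)))"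
    unfolding Re Im by (simp add: abs_divide abs_mult cos_45 sin_45)
  also have "\<dots> < 1"
    by (subst divide_less_eq_1_pos) (auto simp: abs_less_iff add_pos_pos)
  finally have "- 1 < Im w / Re w" "Im w / Re w < 1" by (auto simp only: abs_less_iff)
  then have "arctan (-1) < arctan (Im w / Re w)" "arctan (Im w / Re w) < arctan 1"
    by (simp_all only: arctan_less_iff)
  moreover have "arctan 1 = pi / 4" "arctan (-1) = - pi / 4"
    by (simp_all add: arctan_one arctan_minus)
  ultimately show ?thesis unfolding w_def[symmetric] Ln abs_less_iff by linarith
qed

lemma Im_Ln_third_quadrant:
  assumes "Re z < 0" "Im z < 0"
  shows "- pi < Im (Ln z) \<and> Im (Ln z) < - pi / 2"
proof -
  have "z \<noteq> 0" using assms by auto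
  then show ?thesis
    using assms mpi_less_Im_Ln[of z] Im_Ln_pos_le[of z] Re_Ln_pos_le[of z] Im_Ln_le_pi[of z]
    by (auto simp: abs_if split: if_splits)
qed

text \<open>Termwise comparison in the series \<open>\<psi>(z) = -\<gamma> + \<Sum>k. (1/(k+1) - 1/(z+k))\<close>: the terms
  of the difference are \<open>-y (1/\<bar>a-\<delta>+k+iy\<bar>\<^sup>2 - 1/\<bar>a+k+iy\<bar>\<^sup>2)\<close>, nonnegative because
  \<open>\<bar>a-\<delta>+k\<bar> \<le> a+k\<close> when \<open>\<delta> \<le> 2a\<close>.\<close>

lemma Im_Digamma_Complex_shift_less:
  fixes a \<delta> y :: real
  assumes "y < 0" "0 < \<delta>" "\<delta> \<le> 2 * a"
  shows "Im (Digamma (Complex (a - \<delta>) y)) < Im (Digamma (Complex a y))"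
proof -
  define A where "A = Complex a y"
  define B where "B = Complex (a - \<delta>) y"
  define T where "T k = Im (inverse (B + of_nat k)) - Im (inverse (A + of_nat k))" for k :: nat
  have "A \<noteq> 0" "B \<noteq> 0" using assms by (auto simp: A_def B_def complex_eq_iff)
  then have "(\<lambda>k. (inverse (of_nat (Suc k)) - inverse (A + of_nat k))
                - (inverse (of_nat (Suc k)) - inverse (B + of_nat k)))
             sums ((Digamma A + euler_mascheroni) - (Digamma B + euler_mascheroni))"
    using summable_Digamma by (intro sums_diff) (auto simp: Digamma_def summable_sums)
  then have "(\<lambda>k. inverse (B + of_nat k) - inverse (A + of_nat k)) sums (Digamma A - Digamma B)"
    by simp
  from sums_Im[OF this] have sums: "T sums (Im (Digamma A) - Im (Digamma B))"
    unfolding T_def by (simp only: minus_complex.sel)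
  have T: "T k = - y * (1 / ((a - \<delta> + k)\<^sup>2 + y\<^sup>2) - 1 / ((a + k)\<^sup>2 + y\<^sup>2))" for k
  proof -
    have "B + of_nat k = Complex (a - \<delta> + k) y" "A + of_nat k = Complex (a + k) y"
      by (simp_all add: A_def B_def complex_eq_iff)
    then show ?thesis
      by (simp add: T_def Im_inverse power2_eq_square right_diff_distrib)
  qed
  have sq_diff: "(a + r)\<^sup>2 - (a - \<delta> + r)\<^sup>2 = \<delta> * (2 * a - \<delta> + 2 * r)" for r :: real
    by (simp add: power2_eq_square algebra_simps)
  have sq_le: "(a - \<delta> + k)\<^sup>2 \<le> (a + k)\<^sup>2" for k :: nat
    using sq_diff[of k] assms by (smt (verit) mult_nonneg_nonneg of_nat_0_le_iff)
  have sq_less: "(a - \<delta> + 1)\<^sup>2 < (a + 1)\<^sup>2"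
    using sq_diff[of 1] assms by (smt (verit) mult_pos_pos)
  have "T k \<ge> 0" for k
    unfolding T using assms sq_le[of k]
    by (intro mult_nonneg_nonneg) (auto intro!: divide_left_mono mult_pos_pos add_nonneg_pos)
  moreover have "T 1 > 0"
    unfolding T using assms sq_less
    by (intro mult_pos_pos) (auto intro!: divide_strict_left_mono mult_pos_pos add_nonneg_pos)
  ultimately have "suminf T > 0"
    using sums_summable[OF sums] by (intro suminf_pos2[where i = 1]) auto
  then show ?thesis using sums_unique[OF sums] by (simp add: A_def B_def)
qed

lemma has_real_derivative_Im_ln_Gamma_Complex:
  fixes c m d x :: real
  assumes "d \<noteq> 0"
  shows "((\<lambda>s. Im (ln_Gamma (Complex (c + m * s) d))) has_real_derivative
           m * Im (Digamma (Complex (c + m * x) d))) (at x)"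
proof -
  have eq: "Complex (c + m * s) d = of_real c + of_real m * of_real s + \<i> * of_real d" for s
    by (simp add: complex_eq_iff)
  have "Complex (c + m * x) d \<notin> \<real>\<^sub>\<le>\<^sub>0"
    using assms by (simp add: complex_nonpos_Reals_iff)
  then have "((\<lambda>z. ln_Gamma (of_real c + of_real m * z + \<i> * of_real d)) has_field_derivative
               Digamma (Complex (c + m * x) d) * of_real m) (at (of_real x))"
    by (auto intro!: DERIV_chain2[OF has_field_derivative_ln_Gamma_complex] derivative_eq_intros
        simp: eq)
  then have "((\<lambda>s. Im (ln_Gamma (Complex (c + m * s) d))) has_real_derivative
               Im (Digamma (Complex (c + m * x) d) * of_real m)) (at x)"
    unfolding eq by (rule has_field_derivative_Im[OF has_vector_derivative_real_field])
  then show ?thesis by (simp add: mult.commute)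
qed

lemma f_sig_eq:
  "f_sig \<sigma> t = - pi / 4 + Im (ln_Gamma (Complex (3/4 + (-1/2) * \<sigma>) (- t / 2)))
                          - Im (ln_Gamma (Complex (1/4 + (-1/2) * \<sigma>) (- t / 2)))"
  by (simp add: f_sig_def kappa_def)

lemma f_sig_0_eq: "f_sig 0 t = - pi / 4 + Im (Ln (sin (of_real pi * Complex (1/4) (- t / 2))))"
  using Im_ln_Gamma_reflection[of "1/4" "- t / 2"] by (simp add: f_sig_eq)

lemma f_sig_1_eq:
  assumes "0 < t"
  shows "f_sig 1 t = - pi / 4 - Im (Ln (sin (of_real pi * Complex (1/4) (- t / 2))))
                       + Im (Ln (Complex (-1/4) (- t / 2)))"
proof -
  have "Complex (-1/4) (- t / 2) \<notin> \<real>\<^sub>\<le>\<^sub>0"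
    using assms by (simp add: complex_nonpos_Reals_iff)
  from Im_ln_Gamma_plus1[OF this] have "Im (ln_Gamma (Complex (3/4) (- t / 2)))
      = Im (Ln (Complex (-1/4) (- t / 2))) + Im (ln_Gamma (Complex (-1/4) (- t / 2)))"
    by (simp add: Complex_eq)
  with Im_ln_Gamma_reflection[of "1/4" "- t / 2"] show ?thesis by (simp add: f_sig_eq)
qed

lemma f_sig_0_bounds: "- (pi / 2) < f_sig 0 t \<and> f_sig 0 t < 0"
  using abs_Im_Ln_sin_quarter_less[of "- t / 2"] by (auto simp: f_sig_0_eq abs_less_iff)

lemma f_sig_1_bounds:
  assumes "0 < t"
  shows "- (3 * pi / 2) < f_sig 1 t \<and> f_sig 1 t < - (pi / 2)"
  using abs_Im_Ln_sin_quarter_less[of "- t / 2"] Im_Ln_third_quadrant[of "Complex (-1/4) (- t / 2)"] assms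
  by (auto simp: f_sig_1_eq abs_less_iff)

lemma f_sig_has_negative_derivative:
  assumes "0 < t" "\<sigma> \<le> 1"
  shows "\<exists>D. ((\<lambda>s. f_sig s t) has_real_derivative D) (at \<sigma>) \<and> D < 0"
proof -
  let ?\<psi> = "\<lambda>c. Im (Digamma (Complex (c + (-1/2) * \<sigma>) (- t / 2)))"
  have "((\<lambda>s. Im (ln_Gamma (Complex (c + (-1/2) * s) (- t / 2)))) has_real_derivative
          (-1/2) * ?\<psi> c) (at \<sigma>)" for c
    by (rule has_real_derivative_Im_ln_Gamma_Complex) (use assms in simp)
  from DERIV_diff[OF DERIV_add[OF DERIV_const[of "- pi / 4"] this[of "3/4"]] this[of "1/4"]]
  have "((\<lambda>s. f_sig s t) has_real_derivative (-1/2) * ?\<psi> (3/4) - (-1/2) * ?\<psi> (1/4)) (at \<sigma>)"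
    unfolding f_sig_eq by simp
  moreover have "?\<psi> (1/4) < ?\<psi> (3/4)"
    using Im_Digamma_Complex_shift_less[of "- t / 2" "1/2" "3/4 + (-1/2) * \<sigma>"] assms
    by (simp add: algebra_simps)
  ultimately show ?thesis by (intro exI conjI) auto
qed

lemma f_sig_strict_antimono:
  assumes "0 < t" "0 \<le> \<sigma>" "\<sigma> < \<sigma>'" "\<sigma>' \<le> 1"
  shows "f_sig \<sigma>' t < f_sig \<sigma> t"
  using DERIV_neg_imp_decreasing[of \<sigma> \<sigma>' "\<lambda>s. f_sig s t"] f_sig_has_negative_derivative assms
  by auto

lemma f_sig_interior_bounds:
  assumes "0 < t" "0 < \<sigma>" "\<sigma> < 1"
  shows "- (3 * pi / 2) < f_sig \<sigma> t \<and> f_sig \<sigma> t < 0"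
  using f_sig_strict_antimono[of t 0 \<sigma>] f_sig_strict_antimono[of t \<sigma> 1]
    f_sig_0_bounds[of t] f_sig_1_bounds[of t] assms
  by auto

lemma two_pi_multiple_not_between:
  "\<not> (- (3 * pi / 2) < 2 * pi * of_int k \<and> 2 * pi * of_int k < 0)"
proof
  assume k: "- (3 * pi / 2) < 2 * pi * of_int k \<and> 2 * pi * of_int k < 0"
  then have "of_int k \<le> (-1 :: real)"
    by (simp add: mult_less_0_iff)
  then have "2 * pi * of_int k \<le> 2 * pi * (-1)"
    by (intro mult_left_mono) simp_all
  with k pi_gt_zero show False by linarith
qed

theorem lemma5p2:
  shows "(\<forall>t::real. 0 < t \<longrightarrow> - (pi / 2) < f_sig 0 t \<and> f_sig 0 t < 0)
       \<and> (\<forall>t::real. 0 < t \<longrightarrow> - (3 * pi / 2) < f_sig 1 t \<and> f_sig 1 t < - (pi / 2))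
       \<and> (\<forall>\<sigma> t::real. 0 < \<sigma> \<and> \<sigma> < 1 \<and> 0 < t \<longrightarrow>
            (\<exists>D. ((\<lambda>s. f_sig s t) has_real_derivative D) (at \<sigma>) \<and> D < 0))
       \<and> \<not> (\<exists>\<sigma> t::real. \<exists>k::int. 0 < \<sigma> \<and> \<sigma> < 1 \<and> 0 < t \<and> f_sig \<sigma> t = 2 * pi * of_int k)"
proof (intro conjI allI impI notI)
  fix t :: real assume "0 < t"
  then show "- (pi / 2) < f_sig 0 t" "f_sig 0 t < 0"
    and "- (3 * pi / 2) < f_sig 1 t" "f_sig 1 t < - (pi / 2)"
    using f_sig_0_bounds f_sig_1_bounds by auto
next
  fix \<sigma> t :: real assume "0 < \<sigma> \<and> \<sigma> < 1 \<and> 0 < t"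
  then show "\<exists>D. ((\<lambda>s. f_sig s t) has_real_derivative D) (at \<sigma>) \<and> D < 0"
    by (intro f_sig_has_negative_derivative) auto
next
  assume "\<exists>\<sigma> t::real. \<exists>k::int. 0 < \<sigma> \<and> \<sigma> < 1 \<and> 0 < t \<and> f_sig \<sigma> t = 2 * pi * of_int k"
  then obtain \<sigma> t :: real and k :: int
    where "0 < \<sigma>" "\<sigma> < 1" "0 < t" "f_sig \<sigma> t = 2 * pi * of_int k"
    by blast
  with f_sig_interior_bounds two_pi_multiple_not_between[of k] show False
    by metis
qed

end
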